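(* Let $X$ be a complex Banach space, $0<\alpha<1$, let $A$ satisfy Condition (A), and let $0\le\beta\le1$. Then there exists $C=C(\beta)>0$ such that $\|J^{\beta}(G(\cdot)a)(t)\|\le Ct^{\beta}\|a\|$ for all $t>0$ and $a\in X$. In particular, $J^{\beta}(G(\cdot)a)\in L^{\infty}(0,T;X)$ for every $T>0$.
   Context: Condition (A) on $A:\mathcal{D}(A)\subset X\to X$: (i) closed, densely defined; (ii) $\Sigma_{\vartheta}:=\{z\in\mathbb{C}\setminus\{0\}:|\arg z|<\vartheta\}\subset\rho(A)$ for some $\vartheta\in(\pi/2,\pi)$; (iii) for every $\epsilon\in(0,\vartheta)$, $\|(\lambda-A)^{-1}\|\le C_\epsilon/|\lambda|$ for $\lambda\in\Sigma_{\vartheta-\epsilon}$; (iv) $0\in\rho(A)$. $J^{\beta}v(t)=\frac{1}{\Gamma(\beta)}\int_0^t(t-s)^{\beta-1}v(s)\,ds$ for $\beta>0$, $J^0=$ identity. For $t>0$, $G(t)a:=\frac{1}{2\pi i}\int_{\Gamma}e^{\lambda t}\lambda^{\alpha-1}(\lambda^{\alpha}-A)^{-1}a\,d\lambda$ (principal branches), $\Gamma=\{\rho e^{-i\vartheta}:\rho>1/t\}\cup\{t^{-1}e^{i\theta}:|\theta|\le\vartheta\}\cup\{\rho e^{i\vartheta}:\rho>1/t\}$ oriented from $\infty e^{-i\vartheta}$ to $\infty e^{i\vartheta}$. *)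

theory Defs
  imports "HOL-Analysis.Analysis"
begin

text \<open>A complex Banach space is modelled as a real Banach space together with a
  complex structure J (multiplication by the imaginary unit) compatible with the norm.\<close>

definition cscale :: "('a::real_vector \<Rightarrow> 'a) \<Rightarrow> complex \<Rightarrow> 'a \<Rightarrow> 'a" where
  "cscale J c x = Re c *\<^sub>R x + Im c *\<^sub>R J x"

definition complex_structure :: "('a::real_normed_vector \<Rightarrow> 'a) \<Rightarrow> bool" where
  "complex_structure J \<longleftrightarrow> linear J \<and> (\<forall>x. J (J x) = - x) \<and>
     (\<forall>c x. norm (cscale J c x) = cmod c * norm x)"

definition resolvent_set :: "('a::real_normed_vector \<Rightarrow> 'a) \<Rightarrow> 'a set \<Rightarrow> ('a \<Rightarrow> 'a) \<Rightarrow> complex set" where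
  "resolvent_set J D A = {z. (\<forall>y. \<exists>!x. x \<in> D \<and> cscale J z x - A x = y) \<and>
      (\<exists>K. \<forall>x\<in>D. norm x \<le> K * norm (cscale J z x - A x))}"

definition resolvent :: "('a::real_normed_vector \<Rightarrow> 'a) \<Rightarrow> 'a set \<Rightarrow> ('a \<Rightarrow> 'a) \<Rightarrow> complex \<Rightarrow> 'a \<Rightarrow> 'a" where
  "resolvent J D A z y = (THE x. x \<in> D \<and> cscale J z x - A x = y)"

definition sector :: "real \<Rightarrow> complex set" where
  "sector th = {z. z \<noteq> 0 \<and> \<bar>Arg z\<bar> < th}"

definition condA :: "('a::real_normed_vector \<Rightarrow> 'a) \<Rightarrow> 'a set \<Rightarrow> ('a \<Rightarrow> 'a) \<Rightarrow> real \<Rightarrow> bool" where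
  "condA J D A th \<longleftrightarrow>
     \<comment> \<open>(i) complex linear on a complex subspace, closed, densely defined\<close>
     subspace D \<and> (\<forall>x\<in>D. J x \<in> D) \<and>
     (\<forall>x\<in>D. \<forall>y\<in>D. A (x + y) = A x + A y) \<and>
     (\<forall>x\<in>D. \<forall>c. A (cscale J c x) = cscale J c (A x)) \<and>
     closed {(x, A x) | x. x \<in> D} \<and> closure D = UNIV \<and>
     \<comment> \<open>(ii)\<close>
     pi / 2 < th \<and> th < pi \<and> sector th \<subseteq> resolvent_set J D A \<and>
     \<comment> \<open>(iii)\<close>
     (\<forall>eps. 0 < eps \<and> eps < th \<longrightarrow> (\<exists>C. \<forall>z\<in>sector (th - eps). \<forall>y.
        norm (resolvent J D A z y) \<le> C / cmod z * norm y)) \<and>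
     \<comment> \<open>(iv)\<close>
     0 \<in> resolvent_set J D A"

text \<open>The operator G(t) defined by the contour integral over \<Gamma>, written out via the
  parametrisation of the three pieces of \<Gamma> (two rays, one arc).\<close>

definition Gint :: "('a::real_normed_vector \<Rightarrow> 'a) \<Rightarrow> 'a set \<Rightarrow> ('a \<Rightarrow> 'a) \<Rightarrow> real \<Rightarrow> real \<Rightarrow> complex \<Rightarrow> 'a \<Rightarrow> 'a" where
  "Gint J D A \<alpha> t z a =
     cscale J (exp (z * of_real t) * z powr of_real (\<alpha> - 1))
       (resolvent J D A (z powr of_real \<alpha>) a)"

definition G :: "('a::banach \<Rightarrow> 'a) \<Rightarrow> 'a set \<Rightarrow> ('a \<Rightarrow> 'a) \<Rightarrow> real \<Rightarrow> real \<Rightarrow> real \<Rightarrow> 'a \<Rightarrow> 'a" where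
  "G J D A \<alpha> th t a = cscale J (1 / (2 * of_real pi * \<i>))
     ( - integral {1/t..} (\<lambda>r. cscale J (exp (- \<i> * of_real th))
            (Gint J D A \<alpha> t (of_real r * exp (- \<i> * of_real th)) a))
       + integral {-th..th} (\<lambda>\<phi>. cscale J (\<i> * exp (\<i> * of_real \<phi>) / of_real t)
            (Gint J D A \<alpha> t (exp (\<i> * of_real \<phi>) / of_real t) a))
       + integral {1/t..} (\<lambda>r. cscale J (exp (\<i> * of_real th))
            (Gint J D A \<alpha> t (of_real r * exp (\<i> * of_real th)) a)))"

definition RL_int :: "real \<Rightarrow> (real \<Rightarrow> 'a::banach) \<Rightarrow> real \<Rightarrow> 'a" where
  "RL_int \<beta> v t = (if \<beta> = 0 then v t
     else integral {0..t} (\<lambda>s. ((t - s) powr (\<beta> - 1) / Gamma \<beta>) *\<^sub>R v s))"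

end

theory Submission
  imports Defs
begin

text \<open>The operators G(t) are bounded uniformly in t > 0, and J^\<beta> of a function bounded
  by B is bounded by B t^\<beta> / \<Gamma>(\<beta> + 1). For the uniform bound, \<lambda>^\<alpha> stays in the sector of
  angle \<alpha>\<vartheta> < \<vartheta> where the resolvent estimate holds, so the integrand of G(t) is at most
  K exp(t Re \<lambda>) / |\<lambda>|. On the rays |\<lambda>| \<ge> 1/t we have Re \<lambda> = -c |\<lambda>| with c = -cos \<vartheta> > 0,
  and 1/|\<lambda>| \<le> t, so the ray integrals are at most K exp(-c) / c; on the arc |\<lambda>| = 1/t the
  length element 1/t cancels 1/|\<lambda>| = t and exp(t Re \<lambda>) \<le> e. Neither bound depends on t.\<close>

lemma norm_cscale:
  assumes "complex_structure J"
  shows "norm (cscale J c x) = cmod c * norm x"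
  using assms unfolding complex_structure_def by blast

lemma Arg_powr_of_real:
  fixes z :: complex
  assumes "z \<noteq> 0" "0 \<le> \<alpha>" "\<alpha> \<le> 1"
  shows "Arg (z powr of_real \<alpha>) = \<alpha> * Arg z"
proof -
  have "- pi < Arg z" "Arg z \<le> pi" by (rule mpi_less_Arg, rule Arg_le_pi)
  moreover have "\<bar>\<alpha> * Arg z\<bar> \<le> \<bar>Arg z\<bar>"
    using assms(2,3) by (simp add: abs_mult mult_left_le_one_le)
  moreover have "0 \<le> \<alpha> * Arg z" if "0 \<le> Arg z" using that assms(2) by simp
  ultimately have "- pi < \<alpha> * Arg z" "\<alpha> * Arg z \<le> pi" by linarith+
  moreover have "Im (of_real \<alpha> * Ln z) = \<alpha> * Arg z"
    using assms(1) by (simp add: Arg_eq_Im_Ln)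
  ultimately have "Arg (exp (of_real \<alpha> * Ln z)) = \<alpha> * Arg z"
    by (metis Arg_exp)
  then show ?thesis using assms(1) by (simp add: powr_def)
qed

text \<open>No integrability of f is assumed: if f is not integrable, its integral is 0 by convention.\<close>

lemma norm_integral_le_integral:
  fixes f :: "'n::euclidean_space \<Rightarrow> 'a::banach"
  assumes "g integrable_on S" "\<And>x. x \<in> S \<Longrightarrow> norm (f x) \<le> g x"
  shows "norm (integral S f) \<le> integral S g"
proof (cases "f integrable_on S")
  case True
  then show ?thesis using assms integral_norm_bound_integral by blast
next
  case False
  have "0 \<le> integral S g" using assms by (intro integral_nonneg) (auto intro: order_trans[OF norm_ge_zero])
  then show ?thesis using False by (simp add: not_integrable_integral)
qed

lemma norm_integral_le_integral_off_negligible: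
  fixes f :: "'n::euclidean_space \<Rightarrow> 'a::banach"
  assumes "g integrable_on S" "negligible N" "\<And>x. x \<in> S - N \<Longrightarrow> norm (f x) \<le> g x"
  shows "norm (integral S f) \<le> integral S g"
proof -
  define g' where "g' x = (if x \<in> N then norm (f x) else g x)" for x
  have "g' integrable_on S" using integrable_spike[OF assms(1,2)] by (simp add: g'_def)
  moreover have "integral S g' = integral S g" by (intro integral_spike[OF assms(2)]) (simp add: g'_def)
  ultimately show ?thesis
    using norm_integral_le_integral[of g' S f] assms(3) by (fastforce simp: g'_def)
qed

lemma has_integral_diff_powr_from_0:
  fixes a c :: real
  assumes "a > -1" "c \<ge> 0"
  shows "((\<lambda>x. (c - x) powr a) has_integral (c powr (a + 1) / (a + 1))) {0..c}"
proof -
  have "((\<lambda>x. ((-1) *\<^sub>R x + c) powr a)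
      has_integral (1 / \<bar>-1\<bar> ^ DIM(real)) *\<^sub>R (c powr (a + 1) / (a + 1)))
     ((\<lambda>x. (1 / (-1)) *\<^sub>R x + - ((1 / (-1)) *\<^sub>R c)) ` cbox 0 c)"
    using has_integral_powr_from_0[OF assms] by (intro has_integral_affinity) simp_all
  moreover have "(\<lambda>x::real. c - x) ` {0..c} = {0..c}"
    by (auto simp: image_iff intro!: bexI[where x="c - x" for x])
  ultimately show ?thesis by simp
qed

locale sector_resolvent_bound =
  fixes J :: "'a::banach \<Rightarrow> 'a" and D :: "'a set" and A :: "'a \<Rightarrow> 'a" and S K :: real
  assumes complex_structure: "complex_structure J"
    and K_nonneg: "0 \<le> K"
    and norm_resolvent_le:
      "\<And>w y. w \<in> sector S \<Longrightarrow> norm (resolvent J D A w y) \<le> K / cmod w * norm y"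
begin

lemma norm_Gint_le:
  assumes "0 \<le> \<alpha>" "\<alpha> \<le> 1" "z \<noteq> 0" "\<alpha> * \<bar>Arg z\<bar> < S"
  shows "norm (Gint J D A \<alpha> t z a) \<le> K * exp (t * Re z) / cmod z * norm a"
proof -
  define w where "w = z powr of_real \<alpha>"
  have "w \<noteq> 0" using assms(3) by (simp add: w_def powr_def)
  moreover have "\<bar>Arg w\<bar> = \<alpha> * \<bar>Arg z\<bar>"
    using Arg_powr_of_real[OF assms(3,1,2)] assms(1) by (simp add: w_def abs_mult)
  ultimately have "w \<in> sector S" using assms(4) by (simp add: sector_def)
  moreover have "cmod w = cmod z powr \<alpha>" by (simp add: w_def norm_powr_real_powr')
  ultimately have R: "norm (resolvent J D A w a) \<le> K / cmod z powr \<alpha> * norm a"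
    using norm_resolvent_le by metis
  have "norm (Gint J D A \<alpha> t z a) = exp (t * Re z) * cmod z powr (\<alpha> - 1) * norm (resolvent J D A w a)"
    by (simp add: Gint_def norm_cscale[OF complex_structure] w_def norm_mult norm_powr_real_powr' mult.commute)
  also have "\<dots> \<le> exp (t * Re z) * cmod z powr (\<alpha> - 1) * (K / cmod z powr \<alpha> * norm a)"
    by (intro mult_left_mono R) auto
  also have "\<dots> = K * exp (t * Re z) / cmod z * norm a"
    using assms(3) by (simp add: powr_diff field_simps)
  finally show ?thesis .
qed

lemma norm_ray_integral_le:
  assumes "0 \<le> \<alpha>" "\<alpha> \<le> 1" "cmod e = 1" "Re e = - c" "0 < c" "\<alpha> * \<bar>Arg e\<bar> < S" "0 < t"
  shows "norm (integral {1/t..} (\<lambda>r. cscale J e (Gint J D A \<alpha> t (of_real r * e) a)))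
           \<le> K * exp (- c) / c * norm a"
proof -
  define g where "g r = K * norm a * t * exp (- (c * t) * r)" for r
  have "(g has_integral (K * norm a * t) * (exp (- (c * t) * (1/t)) / (c * t))) {1/t..}"
    unfolding g_def using assms(5,7)
    by (intro has_integral_mult_right has_integral_exp_minus_to_infinity) simp
  moreover have "(K * norm a * t) * (exp (- (c * t) * (1/t)) / (c * t)) = K * exp (- c) / c * norm a"
    using assms(5,7) by (simp add: field_simps)
  ultimately have g: "(g has_integral K * exp (- c) / c * norm a) {1/t..}" by simp
  have "norm (integral {1/t..} (\<lambda>r. cscale J e (Gint J D A \<alpha> t (of_real r * e) a)))
      \<le> integral {1/t..} g"
  proof (rule norm_integral_le_integral)
    show "g integrable_on {1/t..}" using g by blast
    fix r assume "r \<in> {1/t..}"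
    then have "0 < r" using assms(7) by (auto intro: less_le_trans[of 0 "1/t" r])
    moreover from \<open>r \<in> {1/t..}\<close> have "1 / r \<le> t"
      using assms(7) \<open>0 < r\<close> by (simp add: field_simps)
    ultimately have r: "0 < r" "1 / r \<le> t" .
    have "e \<noteq> 0" using assms(3) by auto
    then have "norm (Gint J D A \<alpha> t (of_real r * e) a) \<le> K * exp (t * (- c * r)) / r * norm a"
      using norm_Gint_le[OF assms(1,2), of "of_real r * e" t a] r assms(3,4,6)
      by (simp add: norm_mult mult_ac)
    also have "\<dots> = (1 / r) * (K * norm a * exp (- (c * t) * r))" by (simp add: mult_ac)
    also have "\<dots> \<le> t * (K * norm a * exp (- (c * t) * r))"
      using r K_nonneg by (intro mult_right_mono) auto
    also have "\<dots> = g r" by (simp add: g_def mult_ac)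
    finally show "norm (cscale J e (Gint J D A \<alpha> t (of_real r * e) a)) \<le> g r"
      by (simp add: norm_cscale[OF complex_structure] assms(3))
  qed
  also have "\<dots> = K * exp (- c) / c * norm a" by (rule integral_unique[OF g])
  finally show ?thesis .
qed

lemma norm_arc_integral_le:
  assumes "0 \<le> \<alpha>" "\<alpha> \<le> 1" "0 < th" "th < pi" "\<alpha> * th < S" "0 < t"
  shows "norm (integral {-th..th} (\<lambda>\<phi>. cscale J (\<i> * exp (\<i> * of_real \<phi>) / of_real t)
            (Gint J D A \<alpha> t (exp (\<i> * of_real \<phi>) / of_real t) a)))
           \<le> 2 * th * K * exp 1 * norm a"
proof -
  have g: "((\<lambda>_. K * exp 1 * norm a) has_integral 2 * th * K * exp 1 * norm a) {-th..th}"
    using has_integral_const_real[of "K * exp 1 * norm a" "-th" th] assms(3) by (simp add: mult_ac)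
  have "norm (integral {-th..th} (\<lambda>\<phi>. cscale J (\<i> * exp (\<i> * of_real \<phi>) / of_real t)
            (Gint J D A \<alpha> t (exp (\<i> * of_real \<phi>) / of_real t) a)))
      \<le> integral {-th..th} (\<lambda>_. K * exp 1 * norm a)"
  proof (rule norm_integral_le_integral)
    show "(\<lambda>_. K * exp 1 * norm a) integrable_on {-th..th}" using g by blast
    fix \<phi> assume \<phi>: "\<phi> \<in> {-th..th}"
    define z where "z = of_real (1/t) * exp (\<i> * of_real \<phi>)"
    have z: "exp (\<i> * of_real \<phi>) / of_real t = z" by (simp add: z_def field_simps)
    have "Arg z = \<phi>" using assms(3,4,6) \<phi> by (simp add: z_def Arg_exp)
    moreover have "\<alpha> * \<bar>\<phi>\<bar> \<le> \<alpha> * th" using \<phi> assms(1) by (intro mult_left_mono) auto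
    ultimately have "\<alpha> * \<bar>Arg z\<bar> < S" using assms(5) by simp
    moreover have "z \<noteq> 0" "cmod z = 1 / t" "t * Re z = cos \<phi>"
      using assms(6) by (simp_all add: z_def norm_mult norm_divide Re_exp)
    ultimately have "norm (Gint J D A \<alpha> t z a) \<le> t * K * exp (cos \<phi>) * norm a"
      using norm_Gint_le[OF assms(1,2), of z t a] by (simp add: mult_ac)
    then have "norm (cscale J (\<i> * exp (\<i> * of_real \<phi>) / of_real t) (Gint J D A \<alpha> t z a))
        \<le> K * exp (cos \<phi>) * norm a"
      using assms(6) by (simp add: norm_cscale[OF complex_structure] norm_mult norm_divide field_simps)
    also have "\<dots> \<le> K * exp 1 * norm a"
      using K_nonneg by (intro mult_right_mono mult_left_mono) auto
    finally show "norm (cscale J (\<i> * exp (\<i> * of_real \<phi>) / of_real t)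
        (Gint J D A \<alpha> t (exp (\<i> * of_real \<phi>) / of_real t) a)) \<le> K * exp 1 * norm a"
      by (simp only: z)
  qed
  also have "\<dots> = 2 * th * K * exp 1 * norm a" by (rule integral_unique[OF g])
  finally show ?thesis .
qed

lemma norm_G_le:
  assumes "0 \<le> \<alpha>" "\<alpha> \<le> 1" "0 < th" "th < pi" "cos th < 0" "\<alpha> * th < S" "0 < t"
  shows "norm (G J D A \<alpha> th t a) \<le> (K * exp (cos th) / - cos th + th * K * exp 1) / pi * norm a"
proof -
  define ray where "ray e = integral {1/t..} (\<lambda>r. cscale J e (Gint J D A \<alpha> t (of_real r * e) a))" for e
  define arc where "arc = integral {-th..th} (\<lambda>\<phi>. cscale J (\<i> * exp (\<i> * of_real \<phi>) / of_real t)
            (Gint J D A \<alpha> t (exp (\<i> * of_real \<phi>) / of_real t) a))"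
  have ray_le: "norm (ray (exp (\<i> * of_real \<psi>))) \<le> K * exp (cos th) / - cos th * norm a"
    if "\<psi> = th \<or> \<psi> = - th" for \<psi>
  proof -
    have "Arg (exp (\<i> * of_real \<psi>)) = \<psi>" using that assms(3,4) by (auto simp: Arg_exp)
    then have "\<alpha> * \<bar>Arg (exp (\<i> * of_real \<psi>))\<bar> < S" using that assms(3,6) by auto
    moreover have "cmod (exp (\<i> * of_real \<psi>)) = 1" "Re (exp (\<i> * of_real \<psi>)) = - (- cos th)"
      using that by (auto simp: Re_exp)
    ultimately show ?thesis
      using norm_ray_integral_le[OF assms(1,2), of _ "- cos th" t a] assms(5,7) by (simp add: ray_def)
  qed
  let ?lo = "ray (exp (\<i> * of_real (- th)))" and ?hi = "ray (exp (\<i> * of_real th))"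
  have "norm (G J D A \<alpha> th t a) = norm (- ?lo + arc + ?hi) / (2 * pi)"
    by (simp add: G_def ray_def arc_def norm_cscale[OF complex_structure] norm_divide norm_mult)
  also have "\<dots> \<le> (norm ?lo + norm arc + norm ?hi) / (2 * pi)"
  proof (rule divide_right_mono)
    show "norm (- ?lo + arc + ?hi) \<le> norm ?lo + norm arc + norm ?hi"
      using norm_triangle_ineq[of "- ?lo + arc" ?hi] norm_triangle_ineq[of "- ?lo" arc]
        norm_minus_cancel[of ?lo] by linarith
  qed simp
  also have "\<dots> \<le> (2 * (K * exp (cos th) / - cos th * norm a) + 2 * th * K * exp 1 * norm a) / (2 * pi)"
  proof (rule divide_right_mono)
    have "norm ?lo \<le> K * exp (cos th) / - cos th * norm a" "norm ?hi \<le> K * exp (cos th) / - cos th * norm a"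
      using ray_le[of th] ray_le[of "- th"] by simp_all
    then show "norm ?lo + norm arc + norm ?hi
        \<le> 2 * (K * exp (cos th) / - cos th * norm a) + 2 * th * K * exp 1 * norm a"
      using norm_arc_integral_le[OF assms(1-4,6,7), of a] unfolding arc_def by linarith
  qed simp
  also have "\<dots> = (K * exp (cos th) / - cos th + th * K * exp 1) / pi * norm a"
    by (simp add: field_simps)
  finally show ?thesis .
qed

end


lemma condA_sector_resolvent_bound:
  assumes "complex_structure J" "condA J D A th" "0 < eps" "eps < th"
  shows "\<exists>K. sector_resolvent_bound J D A (th - eps) K"
proof -
  obtain C where C:
    "\<And>w y. w \<in> sector (th - eps) \<Longrightarrow> norm (resolvent J D A w y) \<le> C / cmod w * norm y"
    using assms(2-4) unfolding condA_def by blast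
  have "sector_resolvent_bound J D A (th - eps) \<bar>C\<bar>"
  proof
    fix w and y :: 'a assume "w \<in> sector (th - eps)"
    moreover have "C / cmod w * norm y \<le> \<bar>C\<bar> / cmod w * norm y"
      by (intro mult_right_mono divide_right_mono) auto
    ultimately show "norm (resolvent J D A w y) \<le> \<bar>C\<bar> / cmod w * norm y"
      using C by (meson order_trans)
  qed (use assms(1) in auto)
  then show ?thesis ..
qed

lemma condA_norm_G_bounded:
  assumes "complex_structure J" "0 \<le> \<alpha>" "\<alpha> < 1" "condA J D A th"
  shows "\<exists>CG\<ge>0. \<forall>t>0. \<forall>a. norm (G J D A \<alpha> th t a) \<le> CG * norm a"
proof -
  have th: "pi / 2 < th" "th < pi" using assms(4) by (auto simp: condA_def)
  then have "0 < th" "cos th < 0" by (auto intro: cos_lt_zero_pi)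
  define eps where "eps = (1 - \<alpha>) * th / 2"
  have eps: "0 < eps" "eps < th" "\<alpha> * th < th - eps"
    using \<open>0 < th\<close> assms(2,3) by (auto simp: eps_def field_simps add_pos_nonneg)
  then obtain K where "sector_resolvent_bound J D A (th - eps) K"
    using condA_sector_resolvent_bound[OF assms(1,4)] by blast
  then interpret sector_resolvent_bound J D A "th - eps" K .
  have ray_coeff: "0 \<le> K * exp (cos th) / - cos th"
    using K_nonneg \<open>cos th < 0\<close> by (intro divide_nonneg_pos) auto
  have "0 \<le> (K * exp (cos th) / - cos th + th * K * exp 1) / pi"
    using K_nonneg \<open>0 < th\<close> by (intro divide_nonneg_pos[OF add_nonneg_nonneg[OF ray_coeff]]) auto
  then show ?thesis
    using norm_G_le[OF assms(2) _ \<open>0 < th\<close> th(2) \<open>cos th < 0\<close> eps(3)] assms(3) by auto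
qed

lemma norm_RL_int_le:
  fixes v :: "real \<Rightarrow> 'a::banach"
  assumes "0 \<le> \<beta>" "0 < t" "\<And>s. 0 < s \<Longrightarrow> norm (v s) \<le> B"
  shows "norm (RL_int \<beta> v t) \<le> B / Gamma (\<beta> + 1) * t powr \<beta>"
proof (cases "\<beta> = 0")
  case True
  then show ?thesis using assms(2,3) by (simp add: RL_int_def)
next
  case False
  then have \<beta>: "0 < \<beta>" using assms(1) by simp
  have Gamma: "Gamma (\<beta> + 1) = \<beta> * Gamma \<beta>" "0 < Gamma \<beta>"
    using \<beta> by (auto simp: Gamma_plus1 nonpos_Ints_def)
  define g where "g s = B / Gamma \<beta> * (t - s) powr (\<beta> - 1)" for s
  have g: "(g has_integral B / Gamma \<beta> * (t powr \<beta> / \<beta>)) {0..t}"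
    unfolding g_def using has_integral_diff_powr_from_0[of "\<beta> - 1" t] \<beta> assms(2)
    by (intro has_integral_mult_right) auto
  have "norm (RL_int \<beta> v t)
      = norm (integral {0..t} (\<lambda>s. ((t - s) powr (\<beta> - 1) / Gamma \<beta>) *\<^sub>R v s))"
    using \<beta> by (simp add: RL_int_def)
  also have "\<dots> \<le> integral {0..t} g"
  proof (rule norm_integral_le_integral_off_negligible[where N = "{0}"])
    fix s assume "s \<in> {0..t} - {0}"
    then have "norm (v s) \<le> B" using assms(3) by auto
    have "norm (((t - s) powr (\<beta> - 1) / Gamma \<beta>) *\<^sub>R v s)
        = (t - s) powr (\<beta> - 1) / Gamma \<beta> * norm (v s)"
      using Gamma(2) by simp
    also have "\<dots> \<le> (t - s) powr (\<beta> - 1) / Gamma \<beta> * B"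
      using \<open>norm (v s) \<le> B\<close> Gamma(2) by (intro mult_left_mono) auto
    finally show "norm (((t - s) powr (\<beta> - 1) / Gamma \<beta>) *\<^sub>R v s) \<le> g s"
      by (simp add: g_def mult_ac)
  qed (use g in auto)
  also have "\<dots> = B / Gamma (\<beta> + 1) * t powr \<beta>"
    using integral_unique[OF g] Gamma by simp
  finally show ?thesis .
qed

lemma RL_int_G_powr_bound:
  assumes "complex_structure J" "0 \<le> \<alpha>" "\<alpha> < 1" "condA J D A th" "0 \<le> \<beta>"
  shows "\<exists>C>0. \<forall>t>0. \<forall>a.
           norm (RL_int \<beta> (\<lambda>s. G J D A \<alpha> th s a) t) \<le> C * t powr \<beta> * norm a"
proof -
  obtain CG where CG: "0 \<le> CG" "\<And>t a. 0 < t \<Longrightarrow> norm (G J D A \<alpha> th t a) \<le> CG * norm a"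
    using condA_norm_G_bounded[OF assms(1-4)] by auto
  define C where "C = (CG + 1) / Gamma (\<beta> + 1)"
  have Gamma: "0 < Gamma (\<beta> + 1)" using assms(5) by simp
  have "norm (RL_int \<beta> (\<lambda>s. G J D A \<alpha> th s a) t) \<le> C * t powr \<beta> * norm a"
    if "0 < t" for t a
  proof -
    have "norm (RL_int \<beta> (\<lambda>s. G J D A \<alpha> th s a) t)
        \<le> CG * norm a / Gamma (\<beta> + 1) * t powr \<beta>"
      by (rule norm_RL_int_le[OF assms(5) that]) (rule CG(2))
    also have "\<dots> \<le> C * t powr \<beta> * norm a"
      unfolding C_def using Gamma by (simp add: field_simps mult_right_mono)
    finally show ?thesis .
  qed
  moreover have "0 < C" using CG(1) Gamma by (simp add: C_def)
  ultimately show ?thesis by blast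
qed

theorem lemma3p3:
  fixes J :: "'a::banach \<Rightarrow> 'a" and A :: "'a \<Rightarrow> 'a" and D :: "'a set"
    and \<alpha> \<beta> th :: real
  assumes "complex_structure J"
    and "0 < \<alpha>" and "\<alpha> < 1"
    and "condA J D A th"
    and "0 \<le> \<beta>" and "\<beta> \<le> 1"
  shows "\<exists>C>0. (\<forall>t>0. \<forall>a. norm (RL_int \<beta> (\<lambda>s. G J D A \<alpha> th s a) t) \<le> C * t powr \<beta> * norm a)
           \<and> (\<forall>T>0. \<forall>a. \<exists>M. \<forall>t\<in>{0<..<T}. norm (RL_int \<beta> (\<lambda>s. G J D A \<alpha> th s a) t) \<le> M)"
proof -
  obtain C where C: "0 < C" "\<And>t a. 0 < t \<Longrightarrow>
      norm (RL_int \<beta> (\<lambda>s. G J D A \<alpha> th s a) t) \<le> C * t powr \<beta> * norm a"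
    using RL_int_G_powr_bound[OF assms(1) _ assms(3-5)] assms(2) by auto
  have "norm (RL_int \<beta> (\<lambda>s. G J D A \<alpha> th s a) t) \<le> C * T powr \<beta> * norm a"
    if "t \<in> {0<..<T}" for t T a
  proof -
    have "C * t powr \<beta> * norm a \<le> C * T powr \<beta> * norm a"
      using that C(1) assms(5) by (intro mult_right_mono mult_left_mono powr_mono2) auto
    with C(2)[of t a] that show ?thesis by simp
  qed
  with C show ?thesis by blast
qed

end
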